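(* Let $T$ and $Q$ be selfadjoint bounded operators on a Hilbert space $V$, and assume $Q$ is nonnegative. Then the operator $A:=Q(I+iT)^{-1}\in\mathcal{L}(V)$ is sectorial of some angle $\theta<\frac{\pi}{2}$.
   Context: A closed linear operator $A$ on a Banach space is sectorial of angle $\theta\in(0,\pi)$ if $\sigma(A)\subseteq\Sigma_\theta:=\{z\in\mathbb{C}:|\arg z|\le\theta\}$ and for every $\theta'\in(\theta,\pi)$ one has $\sup_{z\notin\Sigma_{\theta'}}\|zR(z,A)\|<\infty$, where $R(z,A)=(z-A)^{-1}$. *)

theory Defs
  imports "HOL-Analysis.Analysis"
begin

text \<open>A complex Hilbert space
is modelled as a real Hilbert space with a compatible complex scalar multiplication
and a complex inner product (antilinear in the first argument) whose real part is the
real inner product.\<close>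

class complex_vector = real_vector +
  fixes scaleC :: "complex \<Rightarrow> 'a \<Rightarrow> 'a"
  assumes scaleC_add_right: "scaleC a (x + y) = scaleC a x + scaleC a y"
    and scaleC_add_left: "scaleC (a + b) x = scaleC a x + scaleC b x"
    and scaleC_scaleC: "scaleC a (scaleC b x) = scaleC (a * b) x"
    and scaleC_one: "scaleC 1 x = x"
    and scaleR_scaleC: "scaleR r x = scaleC (complex_of_real r) x"

class complex_inner = real_inner + complex_vector +
  fixes cinner :: "'a \<Rightarrow> 'a \<Rightarrow> complex"
  assumes cinner_commute: "cinner x y = cnj (cinner y x)"
    and cinner_add_left: "cinner (x + y) z = cinner x z + cinner y z"
    and cinner_scaleC_left: "cinner (scaleC c x) y = cnj c * cinner x y"
    and inner_cinner: "inner x y = Re (cinner x y)"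

class chilbert_space = complex_inner + complete_space

definition cbounded :: "('v::complex_inner \<Rightarrow> 'v) \<Rightarrow> bool" where
  "cbounded T \<longleftrightarrow> bounded_linear T \<and> (\<forall>c x. T (scaleC c x) = scaleC c (T x))"

definition selfadjoint :: "('v::complex_inner \<Rightarrow> 'v) \<Rightarrow> bool" where
  "selfadjoint T \<longleftrightarrow> (\<forall>x y. cinner (T x) y = cinner x (T y))"

definition nonnegative_op :: "('v::complex_inner \<Rightarrow> 'v) \<Rightarrow> bool" where
  "nonnegative_op Q \<longleftrightarrow> (\<forall>x. Im (cinner (Q x) x) = 0 \<and> Re (cinner (Q x) x) \<ge> 0)"

definition is_resolvent :: "('v::complex_inner \<Rightarrow> 'v) \<Rightarrow> complex \<Rightarrow> ('v \<Rightarrow> 'v) \<Rightarrow> bool" where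
  "is_resolvent A z R \<longleftrightarrow> cbounded R \<and> (\<forall>x. R (scaleC z x - A x) = x)
      \<and> (\<forall>x. scaleC z (R x) - A (R x) = x)"

definition op_spectrum :: "('v::complex_inner \<Rightarrow> 'v) \<Rightarrow> complex set" where
  "op_spectrum A = {z. \<not> (\<exists>R. is_resolvent A z R)}"

definition resolvent :: "('v::complex_inner \<Rightarrow> 'v) \<Rightarrow> complex \<Rightarrow> ('v \<Rightarrow> 'v)" where
  "resolvent A z = (SOME R. is_resolvent A z R)"

definition sector :: "real \<Rightarrow> complex set" where
  "sector \<theta> = {z. z = 0 \<or> \<bar>Arg z\<bar> \<le> \<theta>}"

definition sectorial :: "('v::complex_inner \<Rightarrow> 'v) \<Rightarrow> real \<Rightarrow> bool" where
  "sectorial A \<theta> \<longleftrightarrow> 0 < \<theta> \<and> \<theta> < pi \<and> op_spectrum A \<subseteq> sector \<theta> \<and>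
     (\<forall>\<theta>'. \<theta> < \<theta>' \<and> \<theta>' < pi \<longrightarrow>
        (\<exists>M. \<forall>z. z \<notin> sector \<theta>' \<longrightarrow> onorm (\<lambda>x. scaleC z (resolvent A z x)) \<le> M))"

end

theory Submission
  imports Defs
begin

text \<open>Write \<open>B = I + \<i>T\<close> and \<open>S = B\<^sup>-\<^sup>1\<close>, so that \<open>z - QS = (zB - Q)S\<close>. For a vector \<open>v\<close>,
  \<open>\<langle>v, (zB - Q)v\<rangle> = z w - q\<close> with \<open>w = \<parallel>v\<parallel>\<^sup>2 + \<i>\<langle>v, Tv\<rangle>\<close> in the sector
  \<open>\<bar>Im w\<bar> \<le> \<parallel>T\<parallel> Re w\<close> and \<open>q = \<langle>v, Qv\<rangle> \<ge> 0\<close>. If \<open>\<bar>arg z\<bar> > \<theta> > arctan \<parallel>T\<parallel>\<close>, a unimodular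
  \<open>u\<close> with \<open>Re u \<le> 0\<close> gives \<open>Re (u (z w - q)) \<ge> c \<bar>z\<bar> \<parallel>v\<parallel>\<^sup>2\<close> with \<open>c > 0\<close> depending only on
  \<open>\<theta>\<close> and \<open>\<parallel>T\<parallel>\<close>. By Lax--Milgram \<open>zB - Q\<close> is then invertible with inverse of norm at most
  \<open>1 / (c \<bar>z\<bar>)\<close>, so \<open>R(z, QS) = B (zB - Q)\<^sup>-\<^sup>1\<close> satisfies \<open>\<parallel>z R(z, QS)\<parallel> \<le> (1 + \<parallel>T\<parallel>) / c\<close>.
  Hence \<open>QS\<close> is sectorial of every angle in \<open>(arctan \<parallel>T\<parallel>, \<pi>/2)\<close>.\<close>

lemma scaleC_zero_right [simp]: "scaleC c (0::'a::complex_vector) = 0"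
  using scaleC_add_right[of c "0::'a" 0] by simp

lemma scaleC_minus_right: "scaleC c (- (x::'a::complex_vector)) = - scaleC c x"
  using scaleC_add_right[of c x "-x"] by (intro add.inverse_unique[symmetric]) simp

lemma scaleC_diff_right: "scaleC c ((x::'a::complex_vector) - y) = scaleC c x - scaleC c y"
  using scaleC_add_right[of c x "-y"] scaleC_minus_right[of c y] by simp

lemma scaleC_scaleR_commute: "scaleC c (scaleR r (x::'a::complex_vector)) = scaleR r (scaleC c x)"
  by (simp add: scaleR_scaleC scaleC_scaleC mult.commute)

lemma cinner_scaleC_right: "cinner x (scaleC c (y::'a::complex_inner)) = c * cinner x y"
  by (metis cinner_commute cinner_scaleC_left complex_cnj_cnj complex_cnj_mult)

lemma cinner_add_right: "cinner x (y + (z::'a::complex_inner)) = cinner x y + cinner x z"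
  by (metis cinner_commute cinner_add_left complex_cnj_add)

lemma cinner_zero_right [simp]: "cinner x (0::'a::complex_inner) = 0"
  using cinner_add_right[of x "0::'a" 0] by simp

lemma cinner_minus_right: "cinner x (- (y::'a::complex_inner)) = - cinner x y"
  using cinner_add_right[of x y "-y"] by (intro add.inverse_unique[symmetric]) simp

lemma cinner_diff_right: "cinner x ((y::'a::complex_inner) - z) = cinner x y - cinner x z"
  using cinner_add_right[of x y "-z"] cinner_minus_right[of x z] by simp

lemma cinner_self: "cinner x (x::'a::complex_inner) = complex_of_real ((norm x)\<^sup>2)"
proof (rule complex_eqI)
  show "Im (cinner x x) = Im (complex_of_real ((norm x)\<^sup>2))"
    using cinner_commute[of x x] by (metis Im_complex_of_real Reals_cnj_iff complex_is_Real_iff)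
  show "Re (cinner x x) = Re (complex_of_real ((norm x)\<^sup>2))"
    by (simp add: power2_norm_eq_inner inner_cinner)
qed

lemma inner_scaleC_right: "inner x (scaleC c (y::'a::complex_inner)) = Re (c * cinner x y)"
  by (simp add: inner_cinner cinner_scaleC_right)

lemma norm_scaleC: "norm (scaleC c (x::'a::complex_inner)) = cmod c * norm x"
proof -
  have "(norm (scaleC c x))\<^sup>2 = Re (cnj c * c * cinner x x)"
    by (simp only: power2_norm_eq_inner inner_cinner cinner_scaleC_left cinner_scaleC_right)
       (simp add: ac_simps)
  also have "\<dots> = Re (cnj c * c * complex_of_real ((norm x)\<^sup>2))"
    by (simp only: cinner_self)
  also have "\<dots> = (cmod c * norm x)\<^sup>2"
    by (simp add: complex_norm_square[symmetric] mult.commute power_mult_distrib)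
  finally show ?thesis
    by (simp add: power2_eq_imp_eq)
qed

lemma bounded_linear_scaleC: "bounded_linear (scaleC c :: 'a::complex_inner \<Rightarrow> 'a)"
  by (rule bounded_linear_intro[of _ "cmod c"])
     (simp_all add: scaleC_add_right scaleC_scaleR_commute norm_scaleC mult.commute)

lemma selfadjoint_Im_cinner:
  assumes "selfadjoint T"
  shows "Im (cinner x (T x)) = 0"
proof -
  have "cinner x (T x) = cnj (cinner x (T x))"
    using cinner_commute[of x "T x"] assms by (simp add: selfadjoint_def)
  then show ?thesis
    by (simp add: complex_eq_iff)
qed

lemma nonnegative_op_cinner:
  assumes "nonnegative_op Q"
  shows "cinner x (Q x) = complex_of_real (Re (cinner x (Q x)))" "Re (cinner x (Q x)) \<ge> 0"
  using assms cinner_commute[of x "Q x"] by (auto simp: nonnegative_op_def complex_eq_iff)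

lemma cbounded_add: "cbounded f \<Longrightarrow> cbounded g \<Longrightarrow> cbounded (\<lambda>x. f x + g x)"
  unfolding cbounded_def by (auto intro: bounded_linear_add simp: scaleC_add_right)

lemma cbounded_diff: "cbounded f \<Longrightarrow> cbounded g \<Longrightarrow> cbounded (\<lambda>x. f x - g x)"
  unfolding cbounded_def by (auto intro: bounded_linear_sub simp: scaleC_diff_right)

lemma cbounded_scaleC: "cbounded f \<Longrightarrow> cbounded (\<lambda>x. scaleC c (f x))"
  unfolding cbounded_def
  by (auto intro: bounded_linear_compose[OF bounded_linear_scaleC] simp: scaleC_scaleC mult.commute)

lemma cbounded_compose: "cbounded f \<Longrightarrow> cbounded g \<Longrightarrow> cbounded (\<lambda>x. f (g x))"
  unfolding cbounded_def by (auto intro: bounded_linear_compose)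

lemma cbounded_ident: "cbounded (\<lambda>x. x)"
  unfolding cbounded_def by (auto intro: bounded_linear_ident)

text \<open>Lax--Milgram: if \<open>\<parallel>B\<parallel> \<le> M\<close>, then for \<open>e = c/M\<^sup>2\<close> the map
  \<open>x \<mapsto> x - e (B x - f)\<close> is a contraction with constant \<open>sqrt (1 - c\<^sup>2/M\<^sup>2)\<close>,
  and its fixed point solves \<open>B x = f\<close>.\<close>
lemma coercive_imp_surj:
  fixes B :: "'a::{real_inner,complete_space} \<Rightarrow> 'a"
  assumes "bounded_linear B" and c: "c > 0" and coercive: "\<And>x. c * (norm x)\<^sup>2 \<le> inner x (B x)"
  shows "\<exists>x. B x = f"
proof -
  interpret B: bounded_linear B by fact
  obtain M0 where M0: "\<And>x. norm (B x) \<le> norm x * M0" using B.pos_bounded by blast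
  define M where "M = max M0 c"
  have M: "norm (B x) \<le> norm x * M" for x
    using M0[of x] mult_left_mono[of M0 M "norm x"] by (simp add: M_def)
  have "M > 0" "c \<le> M"
    using c by (auto simp: M_def)
  define e where "e = c / M\<^sup>2"
  define k where "k = sqrt (1 - c\<^sup>2 / M\<^sup>2)"
  have "e > 0"
    using c \<open>M > 0\<close> by (simp add: e_def)
  have k2: "k\<^sup>2 = 1 - c\<^sup>2 / M\<^sup>2" "0 \<le> k" "k < 1"
    using c \<open>M > 0\<close> \<open>c \<le> M\<close> by (auto simp: k_def field_simps power_mono)
  define F where "F x = x - e *\<^sub>R (B x - f)" for x
  have "dist (F x) (F y) \<le> k * dist x y" for x y
  proof -
    define d where "d = x - y"
    have "F x - F y = d - e *\<^sub>R B d"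
      by (simp add: F_def d_def B.diff algebra_simps)
    then have "(norm (F x - F y))\<^sup>2 = (norm d)\<^sup>2 - 2 * e * inner d (B d) + e\<^sup>2 * (norm (B d))\<^sup>2"
      by (simp only: power2_norm_eq_inner inner_diff_left inner_diff_right
          inner_scaleR_left inner_scaleR_right inner_commute[of "B d" d])
         (simp add: power2_eq_square algebra_simps)
    also have "\<dots> \<le> (norm d)\<^sup>2 - 2 * e * (c * (norm d)\<^sup>2) + e\<^sup>2 * (norm d * M)\<^sup>2"
      using mult_left_mono[OF coercive[of d], of e] \<open>e > 0\<close> M[of d]
      by (intro add_mono diff_mono mult_left_mono power_mono) simp_all
    also have "\<dots> = k\<^sup>2 * (norm d)\<^sup>2"
      using \<open>M > 0\<close> unfolding k2(1) e_def by (simp add: field_simps power2_eq_square)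
    finally have "(norm (F x - F y))\<^sup>2 \<le> (k * norm d)\<^sup>2"
      by (simp only: power_mult_distrib)
    then have "norm (F x - F y) \<le> k * norm d"
      by (rule power2_le_imp_le) (simp add: \<open>0 \<le> k\<close>)
    then show ?thesis
      by (simp add: dist_norm d_def)
  qed
  then obtain x where "F x = x"
    using banach_fix_type[of k F] k2 by blast
  then have "e *\<^sub>R (B x - f) = 0"
    by (simp add: F_def)
  then show ?thesis
    using \<open>e > 0\<close> by auto
qed

lemma coercive_norm_lower_bound:
  fixes B :: "'a::complex_inner \<Rightarrow> 'a"
  assumes "cmod u = 1" and coercive: "c * (norm x)\<^sup>2 \<le> inner x (scaleC u (B x))"
  shows "c * norm x \<le> norm (B x)"
proof -
  have "c * norm x * norm x \<le> norm (B x) * norm x"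
    using coercive norm_cauchy_schwarz[of x "scaleC u (B x)"] assms(1)
    by (simp add: norm_scaleC power2_eq_square mult.commute mult.left_commute)
  then show ?thesis
    by (cases "norm x = 0") (simp_all add: mult_le_cancel_right)
qed

lemma cbounded_inverse_of_bounded_below:
  fixes B :: "'a::complex_inner \<Rightarrow> 'a"
  assumes "cbounded B" "surj B" "c > 0" and below: "\<And>x. c * norm x \<le> norm (B x)"
  shows "\<exists>R. cbounded R \<and> (\<forall>x. R (B x) = x) \<and> (\<forall>y. B (R y) = y) \<and> (\<forall>y. c * norm (R y) \<le> norm y)"
proof -
  interpret B: bounded_linear B
    using assms(1) by (simp add: cbounded_def)
  have inj: "x = y" if "B x = B y" for x y
    using below[of "x - y"] that \<open>c > 0\<close> by (simp add: B.diff mult_le_0_iff)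
  define R where "R = inv B"
  have BR: "B (R y) = y" for y
    using \<open>surj B\<close> by (simp add: R_def surj_f_inv_f)
  have RB: "R (B x) = x" for x
    using inj BR by blast
  have bound: "c * norm (R y) \<le> norm y" for y
    using below[of "R y"] by (simp add: BR)
  have "bounded_linear R"
  proof (rule bounded_linear_intro[of R "1 / c"])
    show "R (x + y) = R x + R y" for x y
      by (rule inj) (simp add: BR B.add)
    show "R (scaleR r x) = scaleR r (R x)" for r x
      by (rule inj) (simp add: BR B.scale)
    show "norm (R x) \<le> norm x * (1 / c)" for x
      using bound[of x] \<open>c > 0\<close> by (simp add: pos_le_divide_eq mult.commute[of c])
  qed
  moreover have "R (scaleC a x) = scaleC a (R x)" for a x
    by (rule inj) (use assms(1) in \<open>simp add: BR cbounded_def\<close>)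
  ultimately show ?thesis
    using RB BR bound by (auto simp: cbounded_def)
qed

lemma coercive_cbounded_inverse:
  fixes B :: "'v::chilbert_space \<Rightarrow> 'v"
  assumes "cbounded B" "cmod u = 1" "c > 0"
    and coercive: "\<And>x. c * (norm x)\<^sup>2 \<le> inner x (scaleC u (B x))"
  shows "\<exists>R. cbounded R \<and> (\<forall>x. R (B x) = x) \<and> (\<forall>y. B (R y) = y) \<and> (\<forall>y. c * norm (R y) \<le> norm y)"
proof (rule cbounded_inverse_of_bounded_below)
  show "surj B"
    unfolding surj_def
  proof
    fix y
    have "cbounded (\<lambda>x. scaleC u (B x))"
      using assms(1) by (rule cbounded_scaleC)
    then have "\<exists>x. scaleC u (B x) = scaleC u y"
      using coercive_imp_surj[of "\<lambda>x. scaleC u (B x)" c] \<open>c > 0\<close> coercive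
      by (simp add: cbounded_def)
    then obtain x where "scaleC u (B x) = scaleC u y" ..
    then have "scaleC (inverse u) (scaleC u (B x)) = scaleC (inverse u) (scaleC u y)"
      by simp
    moreover have "u \<noteq> 0"
      using \<open>cmod u = 1\<close> by auto
    ultimately have "y = B x"
      by (simp add: scaleC_scaleC scaleC_one)
    then show "\<exists>x. y = B x"
      by blast
  qed
  show "c * norm x \<le> norm (B x)" for x
    using coercive_norm_lower_bound[OF \<open>cmod u = 1\<close> coercive] .
qed (use assms in auto)

lemma not_in_sector:
  assumes "z \<notin> sector \<theta>" "0 \<le> \<theta>"
  shows "z \<noteq> 0" "Re z < cos \<theta> * cmod z"
proof -
  show "z \<noteq> 0"
    using assms by (auto simp: sector_def)
  have "\<theta> < \<bar>Arg z\<bar>" "\<bar>Arg z\<bar> \<le> pi"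
    using assms Arg_bounded[of z] by (auto simp: sector_def)
  then have "cos \<bar>Arg z\<bar> < cos \<theta>"
    using assms(2) by (intro cos_monotone_0_pi) auto
  then show "Re z < cos \<theta> * cmod z"
    using cos_Arg[OF \<open>z \<noteq> 0\<close>] \<open>z \<noteq> 0\<close> by (simp add: divide_less_eq)
qed

lemma sin_gt_mult_cos:
  fixes K \<theta> :: real
  assumes "K \<ge> 0" "arctan K < \<theta>" "\<theta> < pi"
  shows "K * cos \<theta> < sin \<theta>"
proof -
  have "0 < \<theta>"
    using assms by (smt (verit) zero_le_arctan_iff)
  show ?thesis
  proof (cases "\<theta> < pi / 2")
    case True
    then have "cos \<theta> > 0"
      using \<open>0 < \<theta>\<close> by (intro cos_gt_zero_pi) auto
    have "arctan K < arctan (tan \<theta>)"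
      using assms True \<open>0 < \<theta>\<close> by (simp add: arctan_tan)
    then have "K * cos \<theta> < tan \<theta> * cos \<theta>"
      using \<open>cos \<theta> > 0\<close> by (simp add: arctan_less_iff)
    then show ?thesis
      using \<open>cos \<theta> > 0\<close> by (simp add: tan_def)
  next
    case False
    then have "cos \<theta> \<le> 0"
      using cos_monotone_0_pi_le[of "pi / 2" \<theta>] assms by simp
    moreover have "sin \<theta> > 0"
      using \<open>0 < \<theta>\<close> assms by (intro sin_gt_zero) auto
    ultimately show ?thesis
      using assms(1) by (smt (verit) mult_nonneg_nonpos)
  qed
qed

text \<open>If \<open>Re z \<le> 0\<close>, take \<open>u = z\<^sup>* / \<bar>z\<bar>\<close>; otherwise \<open>u = \<mp>\<i>\<close>, which turns the imaginary part
  of \<open>z\<close>, large since \<open>\<bar>Arg z\<bar> > \<theta>\<close>, into the real part.\<close>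
lemma sector_rotation:
  fixes z :: complex and K \<theta> c :: real
  assumes "K \<ge> 0" "0 \<le> \<theta>" "z \<notin> sector \<theta>" "c \<le> 1" "c \<le> sin \<theta> - K * cos \<theta>"
  shows "\<exists>u. cmod u = 1 \<and> Re u \<le> 0 \<and> (\<forall>w. 0 \<le> Re w \<longrightarrow> \<bar>Im w\<bar> \<le> K * Re w \<longrightarrow> c * cmod z * Re w \<le> Re (u * z * w))"
proof -
  have "z \<noteq> 0" and z: "Re z < cos \<theta> * cmod z"
    using not_in_sector[OF assms(3,2)] by auto
  show ?thesis
  proof (cases "Re z \<le> 0")
    case True
    define u where "u = cnj z / complex_of_real (cmod z)"
    have uz: "u * z = complex_of_real (cmod z)"
      using \<open>z \<noteq> 0\<close> by (simp add: u_def complex_norm_square[symmetric] power2_eq_square field_simps)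
    have "c * cmod z * Re w \<le> Re (u * z * w)" if "0 \<le> Re w" for w
      using mult_right_mono[OF \<open>c \<le> 1\<close>, of "cmod z * Re w"] that by (simp add: uz)
    moreover have "cmod u = 1" "Re u \<le> 0"
      using \<open>z \<noteq> 0\<close> True by (simp_all add: u_def norm_divide divide_nonpos_nonneg)
    ultimately show ?thesis
      by blast
  next
    case False
    have "(sin \<theta> * cmod z)\<^sup>2 = (cmod z)\<^sup>2 - (cos \<theta> * cmod z)\<^sup>2"
      by (simp add: power_mult_distrib sin_squared_eq algebra_simps)
    also have "\<dots> < (cmod z)\<^sup>2 - (Re z)\<^sup>2"
      using False z by (simp add: power_strict_mono)
    also have "\<dots> = \<bar>Im z\<bar>\<^sup>2"
      by (simp add: cmod_power2)
    finally have Im_z: "sin \<theta> * cmod z < \<bar>Im z\<bar>"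
      by (rule power2_less_imp_less) simp
    define u where "u = (if Im z \<ge> 0 then - \<i> else \<i>)"
    have "c * cmod z * Re w \<le> Re (u * z * w)" if "0 \<le> Re w" and w: "\<bar>Im w\<bar> \<le> K * Re w" for w
    proof -
      have "\<bar>Im z\<bar> * Re w - \<bar>Re z * Im w\<bar> \<le> Re (u * z * w)"
        using abs_ge_self[of "Re z * Im w"] abs_ge_minus_self[of "Re z * Im w"] by (auto simp: u_def)
      moreover have "\<bar>Re z * Im w\<bar> \<le> cos \<theta> * cmod z * (K * Re w)"
        unfolding abs_mult using False z w by (intro mult_mono) auto
      moreover have "sin \<theta> * cmod z * Re w \<le> \<bar>Im z\<bar> * Re w"
        using Im_z \<open>0 \<le> Re w\<close> by (simp add: mult_right_mono)
      moreover have "c * (cmod z * Re w) \<le> (sin \<theta> - K * cos \<theta>) * (cmod z * Re w)"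
        using assms(5) \<open>0 \<le> Re w\<close> by (intro mult_right_mono) auto
      ultimately show ?thesis
        by (simp add: algebra_simps)
    qed
    moreover have "cmod u = 1" "Re u \<le> 0"
      by (simp_all add: u_def)
    ultimately show ?thesis
      by blast
  qed
qed

lemma resolvent_eqI:
  assumes "is_resolvent A z R"
  shows "resolvent A z = R"
proof
  fix y
  have R': "is_resolvent A z (resolvent A z)"
    using someI[of "is_resolvent A z" R] assms by (simp add: resolvent_def)
  have "resolvent A z y = resolvent A z (scaleC z (R y) - A (R y))"
    using assms by (simp add: is_resolvent_def)
  also have "\<dots> = R y"
    using R' by (simp add: is_resolvent_def)
  finally show "resolvent A z y = R y" .
qed

lemma sectorialI:
  assumes "0 < \<theta>" "\<theta> < pi"
    and resolvent_bound: "\<And>\<theta>'. \<theta> \<le> \<theta>' \<Longrightarrow> \<theta>' < pi \<Longrightarrow> \<exists>C\<ge>0. \<forall>z. z \<notin> sector \<theta>' \<longrightarrow>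
          (\<exists>R. is_resolvent A z R \<and> (\<forall>y. cmod z * norm (R y) \<le> C * norm y))"
  shows "sectorial A \<theta>"
  unfolding sectorial_def
proof (intro conjI allI impI)
  show "op_spectrum A \<subseteq> sector \<theta>"
    using resolvent_bound[of \<theta>] assms(2) by (auto simp: op_spectrum_def)
  fix \<theta>' assume "\<theta> < \<theta>' \<and> \<theta>' < pi"
  then obtain C where "C \<ge> 0" and C: "\<And>z. z \<notin> sector \<theta>' \<Longrightarrow>
      \<exists>R. is_resolvent A z R \<and> (\<forall>y. cmod z * norm (R y) \<le> C * norm y)"
    using resolvent_bound[of \<theta>'] by auto
  show "\<exists>M. \<forall>z. z \<notin> sector \<theta>' \<longrightarrow> onorm (\<lambda>x. scaleC z (resolvent A z x)) \<le> M"
  proof (intro exI allI impI)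
    fix z assume "z \<notin> sector \<theta>'"
    then obtain R where "is_resolvent A z R" "\<And>y. cmod z * norm (R y) \<le> C * norm y"
      using C by blast
    then show "onorm (\<lambda>x. scaleC z (resolvent A z x)) \<le> C"
      using \<open>C \<ge> 0\<close> by (intro onorm_bound) (simp_all add: resolvent_eqI norm_scaleC)
  qed
qed (use assms in auto)

lemma is_resolvent_comp_inverse:
  assumes "\<And>x. S (B x) = x" "\<And>y. B (S y) = y" "cbounded B" "cbounded R"
    and "\<And>x. R (scaleC z (B x) - Q x) = x" "\<And>y. scaleC z (B (R y)) - Q (R y) = y"
  shows "is_resolvent (Q \<circ> S) z (\<lambda>y. B (R y))"
  unfolding is_resolvent_def
proof (intro conjI allI)
  show "cbounded (\<lambda>y. B (R y))"
    using assms(3,4) by (rule cbounded_compose)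
  fix x
  show "B (R (scaleC z x - (Q \<circ> S) x)) = x"
    using assms(5)[of "S x"] by (simp add: assms(2))
  show "scaleC z (B (R x)) - (Q \<circ> S) (B (R x)) = x"
    by (simp add: assms(1,6))
qed

lemma shifted_operator_coercive:
  fixes T Q :: "'v::complex_inner \<Rightarrow> 'v"
  assumes "selfadjoint T" "nonnegative_op Q" "\<And>x. norm (T x) \<le> K * norm x" "Re u \<le> 0"
    and rotation: "\<And>w. 0 \<le> Re w \<Longrightarrow> \<bar>Im w\<bar> \<le> K * Re w \<Longrightarrow> c * cmod z * Re w \<le> Re (u * z * w)"
  shows "c * cmod z * (norm v)\<^sup>2 \<le> inner v (scaleC u (scaleC z (v + scaleC \<i> (T v)) - Q v))"
proof -
  define t where "t = Re (cinner v (T v))"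
  define q where "q = Re (cinner v (Q v))"
  have "\<bar>t\<bar> \<le> norm v * norm (T v)"
    using Cauchy_Schwarz_ineq2[of v "T v"] by (simp add: t_def inner_cinner)
  also have "\<dots> \<le> K * (norm v)\<^sup>2"
    using mult_left_mono[OF assms(3)[of v] norm_ge_zero[of v]] by (simp add: power2_eq_square mult_ac)
  finally have "\<bar>t\<bar> \<le> K * (norm v)\<^sup>2" .
  have "cinner v (v + scaleC \<i> (T v)) = Complex ((norm v)\<^sup>2) t"
    using selfadjoint_Im_cinner[OF assms(1), of v]
    by (simp add: cinner_add_right cinner_scaleC_right cinner_self t_def complex_eq_iff)
  moreover have "cinner v (Q v) = complex_of_real q"
    using nonnegative_op_cinner(1)[OF assms(2)] by (simp add: q_def)
  ultimately have "inner v (scaleC u (scaleC z (v + scaleC \<i> (T v)) - Q v))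
      = Re (u * z * Complex ((norm v)\<^sup>2) t) - q * Re u"
    by (simp add: inner_scaleC_right cinner_diff_right cinner_scaleC_right algebra_simps)
  moreover have "c * cmod z * (norm v)\<^sup>2 \<le> Re (u * z * Complex ((norm v)\<^sup>2) t)"
    using rotation[of "Complex ((norm v)\<^sup>2) t"] \<open>\<bar>t\<bar> \<le> K * (norm v)\<^sup>2\<close> by simp
  moreover have "q * Re u \<le> 0"
    using nonnegative_op_cinner(2)[OF assms(2)] assms(4) by (simp add: q_def mult_nonneg_nonpos)
  ultimately show ?thesis
    by linarith
qed

lemma shifted_operator_invertible:
  fixes T Q :: "'v::chilbert_space \<Rightarrow> 'v"
  assumes T: "cbounded T" "selfadjoint T" "\<And>x. norm (T x) \<le> K * norm x" "0 \<le> K"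
    and Q: "cbounded Q" "nonnegative_op Q"
    and \<theta>: "arctan K < \<theta>" "\<theta> < pi" and z: "z \<notin> sector \<theta>"
  defines "c \<equiv> min 1 (sin \<theta> - K * cos \<theta>)"
  shows "\<exists>R. cbounded R \<and> (\<forall>x. R (scaleC z (x + scaleC \<i> (T x)) - Q x) = x)
           \<and> (\<forall>y. scaleC z (R y + scaleC \<i> (T (R y))) - Q (R y) = y)
           \<and> (\<forall>y. c * cmod z * norm (R y) \<le> norm y)"
proof -
  have "0 \<le> \<theta>"
    using \<theta> \<open>0 \<le> K\<close> zero_le_arctan_iff[of K] by linarith
  obtain u where u: "cmod u = 1" "Re u \<le> 0"
    "\<And>w. 0 \<le> Re w \<Longrightarrow> \<bar>Im w\<bar> \<le> K * Re w \<Longrightarrow> c * cmod z * Re w \<le> Re (u * z * w)"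
    using sector_rotation[OF \<open>0 \<le> K\<close> \<open>0 \<le> \<theta>\<close> z, of c] by (auto simp: c_def)
  have "c * cmod z > 0"
    using sin_gt_mult_cos[OF \<open>0 \<le> K\<close> \<theta>] not_in_sector(1)[OF z \<open>0 \<le> \<theta>\<close>] by (simp add: c_def)
  have "cbounded (\<lambda>x. scaleC z (x + scaleC \<i> (T x)) - Q x)"
    by (intro cbounded_diff cbounded_scaleC cbounded_add cbounded_ident T(1) Q(1))
  moreover have "c * cmod z * (norm x)\<^sup>2 \<le> inner x (scaleC u (scaleC z (x + scaleC \<i> (T x)) - Q x))" for x
    by (rule shifted_operator_coercive[OF T(2) Q(2) T(3) u(2,3)])
  ultimately show ?thesis
    using coercive_cbounded_inverse[OF _ u(1) \<open>c * cmod z > 0\<close>] by blast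
qed

lemma resolvent_bound_outside_sector:
  fixes T Q S :: "'v::chilbert_space \<Rightarrow> 'v"
  assumes T: "cbounded T" "selfadjoint T" "\<And>x. norm (T x) \<le> K * norm x" "0 \<le> K"
    and Q: "cbounded Q" "nonnegative_op Q"
    and S: "\<And>x. S (x + scaleC \<i> (T x)) = x" "\<And>y. S y + scaleC \<i> (T (S y)) = y"
    and \<theta>: "arctan K < \<theta>" "\<theta> < pi"
  shows "\<exists>C\<ge>0. \<forall>z. z \<notin> sector \<theta> \<longrightarrow>
           (\<exists>R. is_resolvent (Q \<circ> S) z R \<and> (\<forall>y. cmod z * norm (R y) \<le> C * norm y))"
proof -
  define B where "B x = x + scaleC \<i> (T x)" for x
  define c where "c = min 1 (sin \<theta> - K * cos \<theta>)"
  have "c > 0"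
    using sin_gt_mult_cos[OF \<open>0 \<le> K\<close> \<theta>] by (simp add: c_def)
  have "cbounded B"
    unfolding B_def by (intro cbounded_add cbounded_ident cbounded_scaleC T(1))
  have B_le: "norm (B x) \<le> (1 + K) * norm x" for x
  proof -
    have "norm (B x) \<le> norm x + norm (scaleC \<i> (T x))"
      unfolding B_def by (rule norm_triangle_ineq)
    also have "\<dots> \<le> norm x + K * norm x"
      using T(3)[of x] by (simp add: norm_scaleC)
    finally show ?thesis
      by (simp add: algebra_simps)
  qed
  have "\<exists>R. is_resolvent (Q \<circ> S) z R \<and> (\<forall>y. cmod z * norm (R y) \<le> (1 + K) / c * norm y)"
    if z: "z \<notin> sector \<theta>" for z
  proof -
    obtain Rz where Rz: "cbounded Rz" "\<And>x. Rz (scaleC z (B x) - Q x) = x"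
        "\<And>y. scaleC z (B (Rz y)) - Q (Rz y) = y" "\<And>y. c * cmod z * norm (Rz y) \<le> norm y"
      using shifted_operator_invertible[OF T Q \<theta> z] unfolding B_def c_def by blast
    have "is_resolvent (Q \<circ> S) z (\<lambda>y. B (Rz y))"
      by (rule is_resolvent_comp_inverse[OF _ _ \<open>cbounded B\<close> Rz(1-3)]) (simp_all add: B_def S)
    moreover have "cmod z * norm (B (Rz y)) \<le> (1 + K) / c * norm y" for y
    proof -
      have "cmod z * norm (B (Rz y)) \<le> (1 + K) * (cmod z * norm (Rz y))"
        using mult_left_mono[OF B_le[of "Rz y"], of "cmod z"] by (simp add: mult_ac)
      also have "\<dots> \<le> (1 + K) * (norm y / c)"
        using Rz(4)[of y] \<open>c > 0\<close> \<open>0 \<le> K\<close> by (intro mult_left_mono) (simp_all add: field_simps)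
      finally show ?thesis
        by simp
    qed
    ultimately show ?thesis
      by blast
  qed
  then show ?thesis
    using \<open>c > 0\<close> \<open>0 \<le> K\<close> by (intro exI[of _ "(1 + K) / c"]) auto
qed

theorem lemma2p3:
  fixes T Q :: "'v::chilbert_space \<Rightarrow> 'v"
  assumes "cbounded T" and "selfadjoint T"
    and "cbounded Q" and "selfadjoint Q" and "nonnegative_op Q"
  shows "\<exists>S. cbounded S \<and> (\<forall>x. S (x + scaleC \<i> (T x)) = x) \<and> (\<forall>x. S x + scaleC \<i> (T (S x)) = x)
           \<and> (\<exists>\<theta>. \<theta> < pi / 2 \<and> sectorial (Q \<circ> S) \<theta>)"
proof -
  define K where "K = onorm T"
  have "0 \<le> K" and T_le: "\<And>x. norm (T x) \<le> K * norm x"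
    using onorm_pos_le onorm assms(1) by (auto simp: cbounded_def K_def)
  have "cbounded (\<lambda>x. x + scaleC \<i> (T x))"
    by (intro cbounded_add cbounded_ident cbounded_scaleC assms(1))
  moreover have "1 * (norm x)\<^sup>2 \<le> inner x (scaleC 1 (x + scaleC \<i> (T x)))" for x
    using selfadjoint_Im_cinner[OF assms(2), of x]
    by (simp add: scaleC_one inner_cinner cinner_add_right cinner_scaleC_right cinner_self)
  ultimately obtain S where S: "cbounded S" "\<And>x. S (x + scaleC \<i> (T x)) = x"
      "\<And>y. S y + scaleC \<i> (T (S y)) = y"
    using coercive_cbounded_inverse[of "\<lambda>x. x + scaleC \<i> (T x)" 1 1] by auto
  define \<theta> where "\<theta> = (arctan K + pi / 2) / 2"
  have "0 \<le> arctan K" "arctan K < pi / 2"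
    using \<open>0 \<le> K\<close> arctan_ubound by simp_all
  then have \<theta>: "arctan K < \<theta>" "0 < \<theta>" "\<theta> < pi / 2"
    unfolding \<theta>_def by (auto simp del: zero_le_arctan_iff)
  have "sectorial (Q \<circ> S) \<theta>"
    using \<theta> by (intro sectorialI resolvent_bound_outside_sector[OF assms(1,2) T_le \<open>0 \<le> K\<close> assms(3,5) S(2,3)])
      auto
  then show ?thesis
    using S \<theta> by blast
qed

end
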